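(* Let $\mathcal{B}\subseteq[0,1]$ be countable. For a post-scheduling belief $\theta$ on $\mathbb{R}\times\mathcal{B}$ let $L(\theta):=\inf_{\hat e\in\mathbb{R}}\sum_{b\in\mathcal{B}}\int_{\mathbb{R}}(e-\hat e)^2\theta(e,b)\,de$. For any beliefs $\theta,\tilde\theta$ with $\theta\,\mathcal{R}\,\tilde\theta$ we have $L(\theta)\ge L(\tilde\theta)$.
   Context: A belief is a nonnegative function on $\mathbb{R}\times\mathcal{B}$ with $\sum_b\int\theta(e,b)\,de=1$. For $r\in\mathbb{R}$, $\mathcal{S}(r)$ is the set of $\nu:\mathbb{R}\to\mathbb{R}$ with $\nu(x)\ge\nu(y)$ whenever $|x-r|\le|y-r|$. For a Borel set $B$ of finite Lebesgue measure, $B_\sigma$ is the open interval centered at $0$ of the same measure; for nonnegative integrable $h$, $h_\sigma(x)=\int_0^\infty\mathbf{1}_{\{z:h(z)>s\}_\sigma}(x)ds$. For nonnegative integrable $\mu,\nu$ on $\mathbb{R}$, $\mu\prec\nu$ means $\int_{|x|\le s}\mu_\sigma\le\int_{|x|\le s}\nu_\sigma$ for all $s>0$. For beliefs, $\theta\,\mathcal{R}\,\tilde\theta$ means: $\theta(\cdot,b)\prec\tilde\theta(\cdot,b)$ for each $b\in\mathcal{B}$, and there is $r\in\mathbb{R}$ with $\tilde\theta(\cdot,b)\in\mathcal{S}(r)$ for all $b$. *)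

theory Defs
  imports "HOL-Analysis.Analysis"
begin

text \<open>A belief on R x B: theta e b, nonnegative, measurable in e, total mass 1
  (sum over b in B realised as an integral over count_space B).\<close>
definition belief :: "real set \<Rightarrow> (real \<Rightarrow> real \<Rightarrow> real) \<Rightarrow> bool" where
  "belief B \<theta> \<longleftrightarrow>
     (\<forall>e. \<forall>b\<in>B. 0 \<le> \<theta> e b) \<and>
     (\<forall>b\<in>B. (\<lambda>e. \<theta> e b) \<in> borel_measurable lborel) \<and>
     (\<integral>\<^sup>+ b. (\<integral>\<^sup>+ e. ennreal (\<theta> e b) \<partial>lborel) \<partial>count_space B) = 1"

definition symdec :: "real \<Rightarrow> (real \<Rightarrow> real) set" where
  "symdec r = {\<nu>. \<forall>x y. \<bar>x - r\<bar> \<le> \<bar>y - r\<bar> \<longrightarrow> \<nu> x \<ge> \<nu> y}"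

definition sym_set :: "real set \<Rightarrow> real set" where
  "sym_set A = {x. ennreal (2 * \<bar>x\<bar>) < emeasure lborel A}"

definition sym_rearr :: "(real \<Rightarrow> real) \<Rightarrow> real \<Rightarrow> ennreal" where
  "sym_rearr h x = (\<integral>\<^sup>+ s\<in>{0<..}. indicator (sym_set {z. h z > s}) x \<partial>lborel)"

definition majorized :: "(real \<Rightarrow> real) \<Rightarrow> (real \<Rightarrow> real) \<Rightarrow> bool" where
  "majorized \<mu> \<nu> \<longleftrightarrow> (\<forall>s>0.
     (\<integral>\<^sup>+ x\<in>{x. \<bar>x\<bar> \<le> s}. sym_rearr \<mu> x \<partial>lborel)
       \<le> (\<integral>\<^sup>+ x\<in>{x. \<bar>x\<bar> \<le> s}. sym_rearr \<nu> x \<partial>lborel))"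

definition belief_R :: "real set \<Rightarrow> (real \<Rightarrow> real \<Rightarrow> real) \<Rightarrow> (real \<Rightarrow> real \<Rightarrow> real) \<Rightarrow> bool" where
  "belief_R B \<theta> \<theta>' \<longleftrightarrow>
     (\<forall>b\<in>B. majorized (\<lambda>e. \<theta> e b) (\<lambda>e. \<theta>' e b)) \<and>
     (\<exists>r. \<forall>b\<in>B. (\<lambda>e. \<theta>' e b) \<in> symdec r)"

definition loss :: "real set \<Rightarrow> (real \<Rightarrow> real \<Rightarrow> real) \<Rightarrow> ennreal" where
  "loss B \<theta> = (INF eh. \<integral>\<^sup>+ b. (\<integral>\<^sup>+ e. ennreal ((e - eh)\<^sup>2 * \<theta> e b) \<partial>lborel) \<partial>count_space B)"

end

theory Submission
  imports Defs
begin

text \<open>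
  Write \<open>\<lambda>\<^sub>h(s) = |{h > s}|\<close>. By the layer-cake formula, used twice, the second moment
  \<open>\<integral>(e - c)\<^sup>2 h(e) de\<close> equals \<open>\<integral>\<^sub>0\<^sup>\<infinity> \<integral>\<^sub>0\<^sup>\<infinity> |{(e - c)\<^sup>2 > u} \<inter> {h > s}| ds du\<close>. Removing the
  interval \<open>{(e - c)\<^sup>2 \<le> u}\<close> of length \<open>2\<surd>u\<close> leaves at least \<open>(\<lambda>\<^sub>h(s) - 2\<surd>u)\<^sub>+\<close> of a
  superlevel set, with equality when \<open>h\<close> is symmetric decreasing about \<open>c\<close>.

  Since \<open>\<integral>\<^bsub>|x| \<le> T/2\<^esub> h\<^sub>\<sigma> = \<integral>\<^sub>0\<^sup>\<infinity> min(T, \<lambda>\<^sub>h(s)) ds\<close>, majorization \<open>f \<prec> g\<close> says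
  \<open>\<integral> min(T, \<lambda>\<^sub>f) \<le> \<integral> min(T, \<lambda>\<^sub>g)\<close> for all \<open>T\<close>. Letting \<open>T \<rightarrow> \<infinity>\<close> gives
  \<open>\<integral>f \<le> \<integral>g\<close>, so two beliefs of total mass 1 have the same mass in every slice \<open>b\<close>,
  and then \<open>\<integral> (\<lambda>\<^sub>g - T)\<^sub>+ \<le> \<integral> (\<lambda>\<^sub>f - T)\<^sub>+\<close>. Hence the second moment of \<open>\<theta>'(\<cdot>, b)\<close>
  about its common centre \<open>r\<close> is at most that of \<open>\<theta>(\<cdot>, b)\<close> about any point, and summing
  over \<open>b\<close> gives \<open>L(\<theta>') \<le> L(\<theta>)\<close>.
\<close>

lemma nn_integral_layer_cake_weighted:
  fixes f :: "real \<Rightarrow> real" and \<omega> :: "real \<Rightarrow> ennreal"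
  assumes f: "f \<in> borel_measurable lborel" and f_nonneg: "\<And>e. 0 \<le> f e"
    and \<omega>: "\<omega> \<in> borel_measurable lborel"
  shows "(\<integral>\<^sup>+ e. ennreal (f e) * \<omega> e \<partial>lborel)
       = (\<integral>\<^sup>+ s\<in>{0<..}. (\<integral>\<^sup>+ e. \<omega> e * indicator {z. s < f z} e \<partial>lborel) \<partial>lborel)"
proof -
  have "(\<integral>\<^sup>+ e. ennreal (f e) * \<omega> e \<partial>lborel)
      = (\<integral>\<^sup>+ e. (\<integral>\<^sup>+ s. indicator {0<..<f e} s * \<omega> e \<partial>lborel) \<partial>lborel)"
    using f_nonneg by (intro nn_integral_cong) (simp add: nn_integral_multc)
  also have "\<dots> = (\<integral>\<^sup>+ s. (\<integral>\<^sup>+ e. indicator {0<..<f e} s * \<omega> e \<partial>lborel) \<partial>lborel)"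
    by (rule lborel_pair.Fubini'[symmetric])
      (simp add: case_prod_unfold indicator_def; use f \<omega> in measurable)
  also have "\<dots> = (\<integral>\<^sup>+ s\<in>{0<..}. (\<integral>\<^sup>+ e. \<omega> e * indicator {z. s < f z} e \<partial>lborel) \<partial>lborel)"
  proof (intro nn_integral_cong)
    fix s :: real
    have "(\<integral>\<^sup>+ e. indicator {0<..<f e} s * \<omega> e \<partial>lborel)
        = (\<integral>\<^sup>+ e. \<omega> e * indicator {z. s < f z} e * indicator {0<..} s \<partial>lborel)"
      by (intro nn_integral_cong) (auto simp: indicator_def)
    also have "\<dots> = (\<integral>\<^sup>+ e. \<omega> e * indicator {z. s < f z} e \<partial>lborel) * indicator {0<..} s"
      using f \<omega> by (simp add: nn_integral_multc)
    finally show "(\<integral>\<^sup>+ e. indicator {0<..<f e} s * \<omega> e \<partial>lborel)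
        = (\<integral>\<^sup>+ e. \<omega> e * indicator {z. s < f z} e \<partial>lborel) * indicator {0<..} s" .
  qed
  finally show ?thesis .
qed

lemma nn_integral_layer_cake:
  fixes f :: "real \<Rightarrow> real"
  assumes "f \<in> borel_measurable lborel" and "\<And>e. 0 \<le> f e"
  shows "(\<integral>\<^sup>+ e. ennreal (f e) \<partial>lborel) = (\<integral>\<^sup>+ s\<in>{0<..}. emeasure lborel {z. s < f z} \<partial>lborel)"
  using nn_integral_layer_cake_weighted[OF assms, of "\<lambda>_. 1"] assms(1) by simp

lemma borel_measurable_emeasure_superlevel:
  fixes f :: "real \<Rightarrow> real"
  assumes f: "f \<in> borel_measurable lborel"
  shows "(\<lambda>s. emeasure lborel {z. s < f z}) \<in> borel_measurable borel"
proof -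
  have "(\<lambda>s. \<integral>\<^sup>+ z. indicator {z. s < f z} z \<partial>lborel) \<in> borel_measurable borel"
    by (rule lborel.borel_measurable_nn_integral[where N=borel, simplified])
      (simp add: case_prod_unfold indicator_def; use f in measurable)
  then show ?thesis
    using f by simp
qed

lemma emeasure_sym_set_Int_interval:
  fixes A :: "real set" and T :: real
  assumes T: "T > 0"
  shows "emeasure lborel (sym_set A \<inter> {x. \<bar>x\<bar> \<le> T / 2}) = min (ennreal T) (emeasure lborel A)"
proof (cases "emeasure lborel A \<le> ennreal T")
  case True
  then obtain a where a: "emeasure lborel A = ennreal a" "0 \<le> a" "a \<le> T"
    using T by (cases "emeasure lborel A") (auto simp: ennreal_le_iff top_unique)
  have "sym_set A \<inter> {x. \<bar>x\<bar> \<le> T / 2} = {-a/2<..<a/2}"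
    using a by (auto simp: sym_set_def ennreal_less_iff abs_less_iff)
  then show ?thesis
    using True a by (simp add: min_absorb2)
next
  case False
  have "ennreal (2 * \<bar>x\<bar>) < emeasure lborel A" if "\<bar>x\<bar> \<le> T / 2" for x
  proof -
    have "ennreal (2 * \<bar>x\<bar>) \<le> ennreal T"
      using that by (intro ennreal_leI) simp
    also have "\<dots> < emeasure lborel A"
      using False by simp
    finally show ?thesis .
  qed
  then have "sym_set A \<inter> {x. \<bar>x\<bar> \<le> T / 2} = {-T/2..T/2}"
    by (auto simp: sym_set_def)
  then show ?thesis
    using False T by simp
qed

lemma nn_integral_sym_rearr_interval:
  fixes f :: "real \<Rightarrow> real" and T :: real
  assumes f: "f \<in> borel_measurable lborel" and T: "T > 0"
  shows "(\<integral>\<^sup>+ x\<in>{x. \<bar>x\<bar> \<le> T / 2}. sym_rearr f x \<partial>lborel)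
       = (\<integral>\<^sup>+ s\<in>{0<..}. min (ennreal T) (emeasure lborel {z. s < f z}) \<partial>lborel)"
proof -
  let ?I = "{x::real. \<bar>x\<bar> \<le> T / 2}"
  note [measurable] = borel_measurable_emeasure_superlevel[OF f]
  have "(\<integral>\<^sup>+ x\<in>?I. sym_rearr f x \<partial>lborel)
      = (\<integral>\<^sup>+ x. (\<integral>\<^sup>+ s. indicator (sym_set {z. s < f z}) x * indicator {0<..} s * indicator ?I x \<partial>lborel) \<partial>lborel)"
    unfolding sym_rearr_def
    by (intro nn_integral_cong, subst nn_integral_multc) (auto simp: sym_set_def)
  also have "\<dots> = (\<integral>\<^sup>+ s. (\<integral>\<^sup>+ x. indicator (sym_set {z. s < f z}) x * indicator {0<..} s * indicator ?I x \<partial>lborel) \<partial>lborel)"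
    unfolding sym_set_def
    by (rule lborel_pair.Fubini'[symmetric]) (simp add: case_prod_unfold indicator_def; measurable)
  also have "\<dots> = (\<integral>\<^sup>+ s. emeasure lborel (sym_set {z. s < f z} \<inter> ?I) * indicator {0<..} s \<partial>lborel)"
  proof (intro nn_integral_cong)
    fix s :: real
    have "(\<integral>\<^sup>+ x. indicator (sym_set {z. s < f z}) x * indicator {0<..} s * indicator ?I x \<partial>lborel)
        = (\<integral>\<^sup>+ x. indicator (sym_set {z. s < f z} \<inter> ?I) x * indicator {0<..} s \<partial>lborel)"
      by (intro nn_integral_cong) (auto simp: indicator_def)
    also have "\<dots> = emeasure lborel (sym_set {z. s < f z} \<inter> ?I) * indicator {0<..} s"
      by (subst nn_integral_multc) (simp_all add: sym_set_def)
    finally show "(\<integral>\<^sup>+ x. indicator (sym_set {z. s < f z}) x * indicator {0<..} s * indicator ?I x \<partial>lborel)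
        = emeasure lborel (sym_set {z. s < f z} \<inter> ?I) * indicator {0<..} s" .
  qed
  also have "\<dots> = (\<integral>\<^sup>+ s\<in>{0<..}. min (ennreal T) (emeasure lborel {z. s < f z}) \<partial>lborel)"
    by (simp only: emeasure_sym_set_Int_interval[OF T])
  finally show ?thesis .
qed

lemma majorized_truncated_layers_le:
  fixes f g :: "real \<Rightarrow> real" and T :: real
  assumes "majorized f g"
    and "f \<in> borel_measurable lborel" and "g \<in> borel_measurable lborel" and "T > 0"
  shows "(\<integral>\<^sup>+ s\<in>{0<..}. min (ennreal T) (emeasure lborel {z. s < f z}) \<partial>lborel)
       \<le> (\<integral>\<^sup>+ s\<in>{0<..}. min (ennreal T) (emeasure lborel {z. s < g z}) \<partial>lborel)"
proof -
  have "(\<integral>\<^sup>+ x\<in>{x. \<bar>x\<bar> \<le> T / 2}. sym_rearr f x \<partial>lborel)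
      \<le> (\<integral>\<^sup>+ x\<in>{x. \<bar>x\<bar> \<le> T / 2}. sym_rearr g x \<partial>lborel)"
    using assms(1,4) unfolding majorized_def by (meson half_gt_zero)
  then show ?thesis
    using assms(2-4) by (simp only: nn_integral_sym_rearr_interval)
qed

lemma SUP_min_of_nat_ennreal: "(SUP n. min (of_nat (Suc n)) m) = (m::ennreal)"
proof -
  have "(SUP n. min (of_nat (Suc n)) m) = min (SUP n. of_nat (Suc n)) m"
    by (simp only: SUP_inf flip: inf_min)
  also have "(SUP n. of_nat (Suc n) :: ennreal) = top"
    by (meson UNIV_I ennreal_SUP_eq_top lessI nless_le of_nat_mono)
  finally show ?thesis
    by simp
qed

lemma majorized_mass_le:
  fixes f g :: "real \<Rightarrow> real"
  assumes maj: "majorized f g"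
    and f: "f \<in> borel_measurable lborel" and f_nonneg: "\<And>e. 0 \<le> f e"
    and g: "g \<in> borel_measurable lborel" and g_nonneg: "\<And>e. 0 \<le> g e"
  shows "(\<integral>\<^sup>+ e. ennreal (f e) \<partial>lborel) \<le> (\<integral>\<^sup>+ e. ennreal (g e) \<partial>lborel)"
proof -
  let ?trunc = "\<lambda>h n s. min (of_nat (Suc n)) (emeasure lborel {z. s < h z}) * indicator {0<..} s"
  have "(\<integral>\<^sup>+ e. ennreal (f e) \<partial>lborel) = (\<integral>\<^sup>+ s. (SUP n. ?trunc f n s) \<partial>lborel)"
    unfolding nn_integral_layer_cake[OF f f_nonneg]
    by (simp only: SUP_min_of_nat_ennreal flip: SUP_mult_right_ennreal)
  also have "\<dots> = (SUP n. \<integral>\<^sup>+ s. ?trunc f n s \<partial>lborel)"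
    using f by (intro nn_integral_monotone_convergence_SUP)
      (auto simp: incseq_def le_fun_def intro!: mult_right_mono min.mono)
  also have "\<dots> \<le> (SUP n. \<integral>\<^sup>+ s. ?trunc g n s \<partial>lborel)"
    using majorized_truncated_layers_le[OF maj f g, of "real (Suc n)" for n]
    by (intro SUP_mono') (simp add: ennreal_of_nat_eq_real_of_nat)
  also have "\<dots> \<le> (\<integral>\<^sup>+ s\<in>{0<..}. emeasure lborel {z. s < g z} \<partial>lborel)"
    by (intro SUP_least nn_integral_mono mult_right_mono) auto
  also have "\<dots> = (\<integral>\<^sup>+ e. ennreal (g e) \<partial>lborel)"
    using nn_integral_layer_cake[OF g g_nonneg] by simp
  finally show ?thesis .
qed

lemma ennreal_minus_min_eq_minus: "(m::ennreal) - min T m = m - T"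
  by (cases m; cases T) (auto simp: min_def ennreal_minus top_unique ennreal_eq_0_iff)

lemma nn_integral_excess_layers:
  fixes h :: "real \<Rightarrow> real" and T :: real
  assumes h: "h \<in> borel_measurable lborel" and h_nonneg: "\<And>e. 0 \<le> h e"
    and finite_mass: "(\<integral>\<^sup>+ e. ennreal (h e) \<partial>lborel) \<noteq> \<infinity>"
  shows "(\<integral>\<^sup>+ s\<in>{0<..}. (emeasure lborel {z. s < h z} - ennreal T) \<partial>lborel)
       = (\<integral>\<^sup>+ e. ennreal (h e) \<partial>lborel)
         - (\<integral>\<^sup>+ s\<in>{0<..}. min (ennreal T) (emeasure lborel {z. s < h z}) \<partial>lborel)"
proof -
  note [measurable] = borel_measurable_emeasure_superlevel[OF h]
  note layer_cake = nn_integral_layer_cake[OF h h_nonneg]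
  have truncated_le: "(\<integral>\<^sup>+ s\<in>{0<..}. min (ennreal T) (emeasure lborel {z. s < h z}) \<partial>lborel)
      \<le> (\<integral>\<^sup>+ s\<in>{0<..}. emeasure lborel {z. s < h z} \<partial>lborel)"
    by (intro nn_integral_mono mult_right_mono) auto
  have "(\<integral>\<^sup>+ s\<in>{0<..}. (emeasure lborel {z. s < h z} - ennreal T) \<partial>lborel)
      = (\<integral>\<^sup>+ s. emeasure lborel {z. s < h z} * indicator {0<..} s
                - min (ennreal T) (emeasure lborel {z. s < h z}) * indicator {0<..} s \<partial>lborel)"
    by (intro nn_integral_cong) (auto simp: indicator_def ennreal_minus_min_eq_minus)
  also have "\<dots> = (\<integral>\<^sup>+ s\<in>{0<..}. emeasure lborel {z. s < h z} \<partial>lborel)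
                 - (\<integral>\<^sup>+ s\<in>{0<..}. min (ennreal T) (emeasure lborel {z. s < h z}) \<partial>lborel)"
    using truncated_le finite_mass layer_cake
    by (intro nn_integral_diff) (auto intro!: mult_right_mono simp: top_unique)
  finally show ?thesis
    using layer_cake by simp
qed

lemma majorized_excess_layers_le:
  fixes f g :: "real \<Rightarrow> real" and T :: real
  assumes maj: "majorized f g"
    and f: "f \<in> borel_measurable lborel" and f_nonneg: "\<And>e. 0 \<le> f e"
    and g: "g \<in> borel_measurable lborel" and g_nonneg: "\<And>e. 0 \<le> g e"
    and same_mass: "(\<integral>\<^sup>+ e. ennreal (f e) \<partial>lborel) = (\<integral>\<^sup>+ e. ennreal (g e) \<partial>lborel)"
    and finite_mass: "(\<integral>\<^sup>+ e. ennreal (g e) \<partial>lborel) \<noteq> \<infinity>"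
    and T: "T > 0"
  shows "(\<integral>\<^sup>+ s\<in>{0<..}. (emeasure lborel {z. s < g z} - ennreal T) \<partial>lborel)
       \<le> (\<integral>\<^sup>+ s\<in>{0<..}. (emeasure lborel {z. s < f z} - ennreal T) \<partial>lborel)"
  unfolding nn_integral_excess_layers[OF f f_nonneg finite_mass[folded same_mass]]
    nn_integral_excess_layers[OF g g_nonneg finite_mass]
  using majorized_truncated_layers_le[OF maj f g T] same_mass
  by (auto intro: ennreal_minus_mono)

lemma nn_integral_sq_dist_layer_cake:
  fixes h :: "real \<Rightarrow> real" and c :: real
  assumes h: "h \<in> borel_measurable lborel" and h_nonneg: "\<And>e. 0 \<le> h e"
  shows "(\<integral>\<^sup>+ e. ennreal ((e - c)\<^sup>2 * h e) \<partial>lborel)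
       = (\<integral>\<^sup>+ u\<in>{0<..}. (\<integral>\<^sup>+ s\<in>{0<..}.
            emeasure lborel ({e. u < (e - c)\<^sup>2} \<inter> {z. s < h z}) \<partial>lborel) \<partial>lborel)"
proof -
  have inner: "(\<integral>\<^sup>+ e. ennreal (h e) * indicator {e. u < (e - c)\<^sup>2} e \<partial>lborel)
      = (\<integral>\<^sup>+ s\<in>{0<..}. emeasure lborel ({e. u < (e - c)\<^sup>2} \<inter> {z. s < h z}) \<partial>lborel)" for u
  proof -
    have "(\<integral>\<^sup>+ e. ennreal (h e) * indicator {e. u < (e - c)\<^sup>2} e \<partial>lborel)
        = (\<integral>\<^sup>+ s\<in>{0<..}. (\<integral>\<^sup>+ e. indicator {e. u < (e - c)\<^sup>2} e * indicator {z. s < h z} e \<partial>lborel) \<partial>lborel)"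
      by (rule nn_integral_layer_cake_weighted[OF h h_nonneg]) simp
    also have "\<dots> = (\<integral>\<^sup>+ s\<in>{0<..}. emeasure lborel ({e. u < (e - c)\<^sup>2} \<inter> {z. s < h z}) \<partial>lborel)"
      using h by (intro nn_integral_cong) (simp add: indicator_inter_arith[symmetric])
    finally show ?thesis .
  qed
  have "(\<integral>\<^sup>+ e. ennreal ((e - c)\<^sup>2 * h e) \<partial>lborel)
      = (\<integral>\<^sup>+ e. ennreal ((e - c)\<^sup>2) * ennreal (h e) \<partial>lborel)"
    by (intro nn_integral_cong) (simp add: ennreal_mult h_nonneg)
  also have "\<dots> = (\<integral>\<^sup>+ u\<in>{0<..}. (\<integral>\<^sup>+ e. ennreal (h e) * indicator {e. u < (e - c)\<^sup>2} e \<partial>lborel) \<partial>lborel)"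
    using h by (intro nn_integral_layer_cake_weighted) auto
  finally show ?thesis
    by (simp only: inner)
qed

lemma emeasure_sq_dist_le:
  fixes c u :: real
  assumes "0 \<le> u"
  shows "emeasure lborel {e. (e - c)\<^sup>2 \<le> u} = ennreal (2 * sqrt u)"
proof -
  have "(x - c)\<^sup>2 \<le> u \<longleftrightarrow> x \<in> {c - sqrt u .. c + sqrt u}" for x
  proof
    assume "(x - c)\<^sup>2 \<le> u"
    then have "\<bar>x - c\<bar> \<le> sqrt u"
      using real_sqrt_le_mono by fastforce
    then show "x \<in> {c - sqrt u .. c + sqrt u}"
      by (simp add: abs_le_iff)
  next
    assume "x \<in> {c - sqrt u .. c + sqrt u}"
    then show "(x - c)\<^sup>2 \<le> u"
      by (intro sqrt_ge_absD) (simp add: abs_le_iff)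
  qed
  then have "{e. (e - c)\<^sup>2 \<le> u} = {c - sqrt u .. c + sqrt u}"
    by blast
  then show ?thesis
    using assms by simp
qed

lemma emeasure_outside_interval_ge:
  fixes c u :: real and A :: "real set"
  assumes u: "0 \<le> u" and A: "A \<in> sets lborel"
  shows "emeasure lborel A - ennreal (2 * sqrt u) \<le> emeasure lborel ({e. u < (e - c)\<^sup>2} \<inter> A)"
proof -
  have "emeasure lborel A \<le> emeasure lborel (({e. u < (e - c)\<^sup>2} \<inter> A) \<union> {e. (e - c)\<^sup>2 \<le> u})"
    using A by (intro emeasure_mono) auto
  also have "\<dots> \<le> emeasure lborel ({e. u < (e - c)\<^sup>2} \<inter> A) + emeasure lborel {e. (e - c)\<^sup>2 \<le> u}"
    using A by (intro emeasure_subadditive) auto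
  finally show ?thesis
    unfolding emeasure_sq_dist_le[OF u] by (simp add: ennreal_minus_le_iff add.commute)
qed

lemma symdec_superlevel_outside_interval_le:
  fixes r u s :: real and g :: "real \<Rightarrow> real"
  assumes u: "0 \<le> u" and g: "g \<in> borel_measurable lborel" and sd: "g \<in> symdec r"
  shows "emeasure lborel ({e. u < (e - r)\<^sup>2} \<inter> {z. s < g z})
       \<le> emeasure lborel {z. s < g z} - ennreal (2 * sqrt u)"
proof (cases "{e. (e - r)\<^sup>2 \<le> u} \<subseteq> {z. s < g z}")
  case True
  have "{e. u < (e - r)\<^sup>2} \<inter> {z. s < g z} = {z. s < g z} - {e. (e - r)\<^sup>2 \<le> u}"
    by auto
  moreover have "emeasure lborel ({z. s < g z} - {e. (e - r)\<^sup>2 \<le> u})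
      = emeasure lborel {z. s < g z} - emeasure lborel {e. (e - r)\<^sup>2 \<le> u}"
    using True emeasure_sq_dist_le[OF u] g by (intro emeasure_Diff) auto
  ultimately show ?thesis
    using emeasure_sq_dist_le[OF u] by simp
next
  case False
  then obtain x where x: "(x - r)\<^sup>2 \<le> u" "g x \<le> s"
    by (auto simp: subset_eq not_less)
  have "g e \<le> s" if "u < (e - r)\<^sup>2" for e
  proof -
    have "\<bar>x - r\<bar> \<le> \<bar>e - r\<bar>"
      using x(1) that by (simp add: abs_le_square_iff)
    then show ?thesis
      using sd x(2) unfolding symdec_def by force
  qed
  then have "{e. u < (e - r)\<^sup>2} \<inter> {z. s < g z} = {}"
    by force
  then show ?thesis
    by simp
qed

lemma majorized_symdec_second_moment_le:
  fixes f g :: "real \<Rightarrow> real" and c r :: real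
  assumes maj: "majorized f g" and sd: "g \<in> symdec r"
    and f: "f \<in> borel_measurable lborel" and f_nonneg: "\<And>e. 0 \<le> f e"
    and g: "g \<in> borel_measurable lborel" and g_nonneg: "\<And>e. 0 \<le> g e"
    and same_mass: "(\<integral>\<^sup>+ e. ennreal (f e) \<partial>lborel) = (\<integral>\<^sup>+ e. ennreal (g e) \<partial>lborel)"
    and finite_mass: "(\<integral>\<^sup>+ e. ennreal (g e) \<partial>lborel) \<noteq> \<infinity>"
  shows "(\<integral>\<^sup>+ e. ennreal ((e - r)\<^sup>2 * g e) \<partial>lborel) \<le> (\<integral>\<^sup>+ e. ennreal ((e - c)\<^sup>2 * f e) \<partial>lborel)"
proof -
  have "(\<integral>\<^sup>+ s\<in>{0<..}. emeasure lborel ({e. u < (e - r)\<^sup>2} \<inter> {z. s < g z}) \<partial>lborel)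
      \<le> (\<integral>\<^sup>+ s\<in>{0<..}. emeasure lborel ({e. u < (e - c)\<^sup>2} \<inter> {z. s < f z}) \<partial>lborel)"
    if u: "u > 0" for u
  proof -
    have "(\<integral>\<^sup>+ s\<in>{0<..}. emeasure lborel ({e. u < (e - r)\<^sup>2} \<inter> {z. s < g z}) \<partial>lborel)
        \<le> (\<integral>\<^sup>+ s\<in>{0<..}. (emeasure lborel {z. s < g z} - ennreal (2 * sqrt u)) \<partial>lborel)"
      using u g sd by (intro nn_integral_mono mult_right_mono symdec_superlevel_outside_interval_le) auto
    also have "\<dots> \<le> (\<integral>\<^sup>+ s\<in>{0<..}. (emeasure lborel {z. s < f z} - ennreal (2 * sqrt u)) \<partial>lborel)"
      using u by (intro majorized_excess_layers_le[OF maj f f_nonneg g g_nonneg same_mass finite_mass]) simp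
    also have "\<dots> \<le> (\<integral>\<^sup>+ s\<in>{0<..}. emeasure lborel ({e. u < (e - c)\<^sup>2} \<inter> {z. s < f z}) \<partial>lborel)"
      using u f by (intro nn_integral_mono mult_right_mono emeasure_outside_interval_ge) auto
    finally show ?thesis .
  qed
  then show ?thesis
    unfolding nn_integral_sq_dist_layer_cake[OF f f_nonneg] nn_integral_sq_dist_layer_cake[OF g g_nonneg]
    by (intro nn_integral_mono) (auto simp: indicator_def)
qed

lemma le_nn_integral_count_space:
  fixes a :: "'a \<Rightarrow> ennreal"
  assumes "b \<in> B"
  shows "a b \<le> (\<integral>\<^sup>+ x. a x \<partial>count_space B)"
proof -
  have "a b = (\<integral>\<^sup>+ x. a x * indicator {b} x \<partial>count_space B)"
    using assms by simp
  also have "\<dots> \<le> (\<integral>\<^sup>+ x. a x \<partial>count_space B)"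
    by (intro nn_integral_mono) (auto simp: indicator_def)
  finally show ?thesis .
qed

lemma nn_integral_count_space_eq_imp_eq:
  fixes a c :: "'a \<Rightarrow> ennreal"
  assumes le: "\<And>x. x \<in> B \<Longrightarrow> a x \<le> c x"
    and eq: "(\<integral>\<^sup>+ x. a x \<partial>count_space B) = (\<integral>\<^sup>+ x. c x \<partial>count_space B)"
    and finite: "(\<integral>\<^sup>+ x. c x \<partial>count_space B) \<noteq> \<infinity>"
    and b: "b \<in> B"
  shows "a b = c b"
proof -
  have "(\<integral>\<^sup>+ x. c x \<partial>count_space B) = (\<integral>\<^sup>+ x. a x + (c x - a x) \<partial>count_space B)"
    by (intro nn_integral_cong) (simp add: le add_diff_inverse_ennreal)
  also have "\<dots> = (\<integral>\<^sup>+ x. a x \<partial>count_space B) + (\<integral>\<^sup>+ x. c x - a x \<partial>count_space B)"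
    by (rule nn_integral_add) auto
  finally have "(\<integral>\<^sup>+ x. c x - a x \<partial>count_space B) = 0"
    using eq finite by (metis add.right_neutral ennreal_add_left_cancel)
  then have "c b - a b = 0"
    using b by (simp add: nn_integral_0_iff_AE AE_count_space)
  then show ?thesis
    using le[OF b] by (simp add: antisym ennreal_minus_eq_0)
qed

lemma belief_R_slice_mass_eq:
  assumes \<theta>: "belief B \<theta>" and \<theta>': "belief B \<theta>'" and R: "belief_R B \<theta> \<theta>'" and b: "b \<in> B"
  shows "(\<integral>\<^sup>+ e. ennreal (\<theta> e b) \<partial>lborel) = (\<integral>\<^sup>+ e. ennreal (\<theta>' e b) \<partial>lborel)"
    and "(\<integral>\<^sup>+ e. ennreal (\<theta>' e b) \<partial>lborel) \<noteq> \<infinity>"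
proof -
  have slice_le: "(\<integral>\<^sup>+ e. ennreal (\<theta> e x) \<partial>lborel) \<le> (\<integral>\<^sup>+ e. ennreal (\<theta>' e x) \<partial>lborel)"
    if "x \<in> B" for x
    using \<theta> \<theta>' R that unfolding belief_def belief_R_def by (intro majorized_mass_le) auto
  have total: "(\<integral>\<^sup>+ x. (\<integral>\<^sup>+ e. ennreal (\<theta> e x) \<partial>lborel) \<partial>count_space B) = 1"
    "(\<integral>\<^sup>+ x. (\<integral>\<^sup>+ e. ennreal (\<theta>' e x) \<partial>lborel) \<partial>count_space B) = 1"
    using \<theta> \<theta>' unfolding belief_def by auto
  show "(\<integral>\<^sup>+ e. ennreal (\<theta> e b) \<partial>lborel) = (\<integral>\<^sup>+ e. ennreal (\<theta>' e b) \<partial>lborel)"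
    using total b by (intro nn_integral_count_space_eq_imp_eq[OF slice_le]) auto
  show "(\<integral>\<^sup>+ e. ennreal (\<theta>' e b) \<partial>lborel) \<noteq> \<infinity>"
    using le_nn_integral_count_space[OF b, of "\<lambda>x. \<integral>\<^sup>+ e. ennreal (\<theta>' e x) \<partial>lborel"] total(2)
    by (auto simp: top_unique)
qed

theorem lemma13:
  fixes B :: "real set" and \<theta> \<theta>' :: "real \<Rightarrow> real \<Rightarrow> real"
  assumes "countable B" and "B \<subseteq> {0..1}"
    and "belief B \<theta>" and "belief B \<theta>'"
    and "belief_R B \<theta> \<theta>'"
  shows "loss B \<theta> \<ge> loss B \<theta>'"
proof -
  obtain r where sd: "\<And>b. b \<in> B \<Longrightarrow> (\<lambda>e. \<theta>' e b) \<in> symdec r"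
    using assms(5) unfolding belief_R_def by auto
  have slice_moment_le: "(\<integral>\<^sup>+ e. ennreal ((e - r)\<^sup>2 * \<theta>' e b) \<partial>lborel)
      \<le> (\<integral>\<^sup>+ e. ennreal ((e - eh)\<^sup>2 * \<theta> e b) \<partial>lborel)" if b: "b \<in> B" for b eh
    using assms(3-5) b sd[OF b] belief_R_slice_mass_eq[OF assms(3-5) b]
    unfolding belief_def belief_R_def by (intro majorized_symdec_second_moment_le) auto
  show ?thesis
    unfolding loss_def
    by (intro INF_greatest INF_lower2[of r] nn_integral_mono slice_moment_le) auto
qed

end
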